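(* Let $n\ge1$, let $\Delta\subset\mathbb{R}^n$ be an $n$-simplex with vertices $\mathbf{x}_0,\dots,\mathbf{x}_n$, let $f\colon\Delta\to\mathbb{R}$ be convex, and let $k$ be an integer with $1\le k\le n+1$. Then $$\operatorname{Avg}(f,\Delta)\le \alpha_n\frac{1}{\binom{n+1}{k}}\sum_{\substack{K\subset N\\ \operatorname{card}K=k}}f(\mathbf{b}_K)+(1-\alpha_n)\frac{f(\mathbf{x}_0)+\dots+f(\mathbf{x}_n)}{n+1},\qquad \alpha_n=\frac{\lfloor (n+1)/k\rfloor}{n+1},$$ where $N=\{0,\dots,n\}$ and $\mathbf{b}_K=\frac{1}{\operatorname{card}K}\sum_{i\in K}\mathbf{x}_i$.
   Context: $\mathbf{x}_0,\dots,\mathbf{x}_n\in\mathbb{R}^n$ are affinely independent and $\Delta=\operatorname{conv}\{\mathbf{x}_0,\dots,\mathbf{x}_n\}$. $\operatorname{Avg}(f,\Delta)=\frac{1}{\operatorname{Vol}_n(\Delta)}\int_\Delta f(\mathbf{x})\,d\mathbf{x}$ (Lebesgue measure on $\mathbb{R}^n$). *)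

theory Defs
  imports "HOL-Analysis.Analysis"
begin

definition Avg :: "('a::euclidean_space \<Rightarrow> real) \<Rightarrow> 'a set \<Rightarrow> real" where
  "Avg f S = (LINT x:S|lebesgue. f x) / measure lebesgue S"

definition bary :: "(nat \<Rightarrow> 'a::real_vector) \<Rightarrow> nat set \<Rightarrow> 'a" where
  "bary x K = (1 / real (card K)) *\<^sub>R (\<Sum>i\<in>K. x i)"

end

theory Submission
  imports Defs
begin

(*
  Let l_i(p) be the barycentric coordinates of p in the simplex and m_K(p) the minimum of l_i(p)
  over i in K. With C = (n choose k - 1), the number of k-sets containing a fixed vertex, every
  point is the convex combination

    p = sum_K (k m_K(p) / C) b_K + sum_i (l_i(p) - (1/C) sum_{K containing i} m_K(p)) x_i,

  so Jensen's inequality bounds f(p) pointwise by values of f at barycenters and vertices. The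
  level set {m_K >= t} is the image of the simplex under a homothety of ratio 1 - k t, so it has
  volume (1 - k t)^n Vol; integrating over t gives Avg m_K = 1 / (k (n + 1)). Averaging the
  pointwise bound therefore yields the inequality with weight 1/k in place of alpha_n. Finally
  alpha_n <= 1/k, and by Jensen the mean of f over the barycenters is at most its mean over the
  vertices, so lowering the weight of the barycenter term can only increase the right-hand side.
*)

lemma power_Suc_diff_bounds:
  fixes a :: real
  assumes "0 \<le> a"
  shows "real (n + 1) * a ^ n \<le> (a + 1) ^ (n + 1) - a ^ (n + 1)"
    and "(a + 1) ^ (n + 1) - a ^ (n + 1) \<le> real (n + 1) * (a + 1) ^ n"
proof -
  have diff: "(a + 1) ^ (n + 1) - a ^ (n + 1) = (\<Sum>i<n + 1. a ^ (n - i) * (a + 1) ^ i)"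
    using power_diff_sumr2[of "a + 1" "n + 1" a] by simp
  have "a ^ n \<le> a ^ (n - i) * (a + 1) ^ i" if "i < n + 1" for i
  proof -
    have "a ^ n = a ^ (n - i) * a ^ i" using that by (simp flip: power_add)
    also have "\<dots> \<le> a ^ (n - i) * (a + 1) ^ i" using assms by (intro mult_left_mono power_mono) auto
    finally show ?thesis .
  qed
  then have "(\<Sum>i<n + 1. a ^ n) \<le> (\<Sum>i<n + 1. a ^ (n - i) * (a + 1) ^ i)" by (intro sum_mono) auto
  then show "real (n + 1) * a ^ n \<le> (a + 1) ^ (n + 1) - a ^ (n + 1)"
    unfolding diff by (simp only: sum_constant card_lessThan)
  have "a ^ (n - i) * (a + 1) ^ i \<le> (a + 1) ^ n" if "i < n + 1" for i
  proof -
    have "a ^ (n - i) * (a + 1) ^ i \<le> (a + 1) ^ (n - i) * (a + 1) ^ i"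
      using assms by (intro mult_right_mono power_mono) auto
    also have "\<dots> = (a + 1) ^ n" using that by (simp flip: power_add)
    finally show ?thesis .
  qed
  then have "(\<Sum>i<n + 1. a ^ (n - i) * (a + 1) ^ i) \<le> (\<Sum>i<n + 1. (a + 1) ^ n)" by (intro sum_mono) auto
  then show "(a + 1) ^ (n + 1) - a ^ (n + 1) \<le> real (n + 1) * (a + 1) ^ n"
    unfolding diff by (simp only: sum_constant card_lessThan)
qed

lemma power_sum_bounds:
  fixes M n :: nat
  shows "real (n + 1) * (\<Sum>i\<in>{1..<M}. real i ^ n) \<le> real M ^ (n + 1)"
    and "real M ^ (n + 1) \<le> real (n + 1) * ((\<Sum>i\<in>{1..<M}. real i ^ n) + real M ^ n)"
proof -
  have telescope: "real M ^ (n + 1) = (\<Sum>i<M. real (Suc i) ^ (n + 1) - real i ^ (n + 1))"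
    by (subst sum_lessThan_telescope) (simp add: power_0_left)
  have "real (n + 1) * (\<Sum>i\<in>{1..<M}. real i ^ n) \<le> real (n + 1) * (\<Sum>i<M. real i ^ n)"
    by (intro mult_left_mono sum_mono2) auto
  also have "\<dots> \<le> real M ^ (n + 1)"
    unfolding telescope sum_distrib_left
    using power_Suc_diff_bounds(1)[of "real i" n for i] by (intro sum_mono) (simp add: add.commute)
  finally show "real (n + 1) * (\<Sum>i\<in>{1..<M}. real i ^ n) \<le> real M ^ (n + 1)" .
  have "real M ^ (n + 1) \<le> real (n + 1) * (\<Sum>i<M. real (Suc i) ^ n)"
    unfolding telescope sum_distrib_left
    using power_Suc_diff_bounds(2)[of "real i" n for i] by (intro sum_mono) (simp add: add.commute)
  also have "(\<Sum>i<M. real (Suc i) ^ n) \<le> (\<Sum>i\<in>{1..<M}. real i ^ n) + real M ^ n"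
  proof (cases M)
    case (Suc m)
    have "(\<Sum>i<Suc M. real i ^ n) = 0 ^ n + (\<Sum>i<M. real (Suc i) ^ n)"
      by (subst sum.lessThan_Suc_shift) simp
    moreover have "(\<Sum>i<M. real i ^ n) = 0 ^ n + (\<Sum>i\<in>{1..<M}. real i ^ n)"
      using Suc by (simp add: sum.atLeast_Suc_lessThan atLeast0LessThan[symmetric])
    ultimately show ?thesis by simp
  qed simp
  finally show "real M ^ (n + 1) \<le> real (n + 1) * ((\<Sum>i\<in>{1..<M}. real i ^ n) + real M ^ n)"
    by (simp add: mult_left_mono)
qed

lemma card_nat_le_bounds:
  fixes y :: real
  assumes "0 \<le> y" "y \<le> real M"
  shows "real (card {j\<in>{1..<M}. real j \<le> y}) \<le> y"
    and "y \<le> real (card {j\<in>{1..<M}. real j \<le> y}) + 1"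
proof -
  define m where "m = min (M - 1) (nat \<lfloor>y\<rfloor>)"
  have "real j \<le> y \<longleftrightarrow> j \<le> nat \<lfloor>y\<rfloor>" for j
    using assms(1) le_nat_floor of_nat_floor order.trans of_nat_mono by metis
  then have eq: "{j\<in>{1..<M}. real j \<le> y} = {1..m}"
    unfolding m_def by fastforce
  have "real m \<le> y"
  proof -
    have "real m \<le> real (nat \<lfloor>y\<rfloor>)" by (simp add: m_def)
    also have "\<dots> \<le> y" using assms(1) by simp
    finally show ?thesis .
  qed
  then show "real (card {j\<in>{1..<M}. real j \<le> y}) \<le> y"
    unfolding eq by simp
  have "y \<le> real m + 1"
  proof (cases "M - 1 \<le> nat \<lfloor>y\<rfloor>")
    case True
    then show ?thesis using assms(2) by (simp add: m_def min_absorb1 of_nat_diff)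
  next
    case False
    then have "m = nat \<lfloor>y\<rfloor>" by (simp add: m_def)
    then show ?thesis using assms(1) real_of_int_floor_add_one_gt[of y] by simp
  qed
  then show "y \<le> real (card {j\<in>{1..<M}. real j \<le> y}) + 1"
    unfolding eq by simp
qed

lemma set_integrable_sum:
  fixes f :: "'i \<Rightarrow> 'b \<Rightarrow> 'c::{banach, second_countable_topology}"
  assumes "\<And>i. i \<in> I \<Longrightarrow> set_integrable M A (f i)"
  shows "set_integrable M A (\<lambda>x. \<Sum>i\<in>I. f i x)"
  using assms unfolding set_integrable_def by (simp add: scaleR_sum_right)

lemma set_integral_sum:
  fixes f :: "'i \<Rightarrow> 'b \<Rightarrow> 'c::{banach, second_countable_topology}"
  assumes "\<And>i. i \<in> I \<Longrightarrow> set_integrable M A (f i)"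
  shows "(LINT x:A|M. (\<Sum>i\<in>I. f i x)) = (\<Sum>i\<in>I. LINT x:A|M. f i x)"
  using assms unfolding set_integrable_def set_lebesgue_integral_def
  by (simp add: scaleR_sum_right)

lemma level_indicator_sum_bounds:
  fixes g :: "'a \<Rightarrow> real" and m :: nat
  assumes g_range: "\<And>p. p \<in> A \<Longrightarrow> 0 \<le> g p \<and> g p \<le> 1" and m: "1 \<le> m"
  defines "lower p \<equiv> (\<Sum>j\<in>{1..<m}. indicator {q \<in> A. real j / m \<le> g q} p) / real m"
  shows "lower p \<le> indicator A p * g p" and "indicator A p * g p \<le> lower p + indicator A p / m"
proof -
  have "lower p \<le> indicator A p * g p \<and> indicator A p * g p \<le> lower p + indicator A p / m"
  proof (cases "p \<in> A")
    case True
    have "real j / m \<le> g p \<longleftrightarrow> real j \<le> m * g p" for j using m by (simp add: field_simps)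
    then have "lower p = real (card {j\<in>{1..<m}. real j \<le> m * g p}) / m"
      unfolding lower_def indicator_def using True by (simp add: sum.If_cases Int_def)
    moreover have "0 \<le> m * g p" "m * g p \<le> m"
      using g_range[OF True] mult_left_le[of "g p" "real m"] by auto
    note card_nat_le_bounds[OF this]
    ultimately have "m * lower p \<le> m * g p \<and> m * g p \<le> m * (lower p + 1 / m)"
      using m by (simp add: distrib_left)
    then show ?thesis using True m by (simp add: mult_le_cancel_left_pos)
  qed (simp add: lower_def)
  then show "lower p \<le> indicator A p * g p" "indicator A p * g p \<le> lower p + indicator A p / m"
    by simp_all
qed

lemma set_integral_level_measures_approx:
  fixes g :: "'a \<Rightarrow> real" and m :: nat
  assumes A: "A \<in> sets M" "emeasure M A < \<infinity>"
    and g: "set_integrable M A g"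
    and g_range: "\<And>p. p \<in> A \<Longrightarrow> 0 \<le> g p \<and> g p \<le> 1"
    and level: "\<And>t. 0 < t \<Longrightarrow> t < 1 \<Longrightarrow>
      {p \<in> A. t \<le> g p} \<in> sets M \<and> measure M {p \<in> A. t \<le> g p} = (1 - t) ^ n * measure M A"
    and m: "1 \<le> m"
  shows "\<bar>(LINT p:A|M. g p) - measure M A / (n + 1)\<bar> \<le> measure M A / m"
proof -
  define V where "V = measure M A"
  define lower where "lower p = (\<Sum>j\<in>{1..<m}. indicator {q \<in> A. real j / m \<le> g q} p) / real m" for p
  define R where "R = (\<Sum>i\<in>{1..<m}. real i ^ n) / real m ^ (n + 1)"
  have level_j: "{q \<in> A. real j / m \<le> g q} \<in> sets M" "emeasure M {q \<in> A. real j / m \<le> g q} < \<infinity>"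
      "measure M {q \<in> A. real j / m \<le> g q} = real (m - j) ^ n / real m ^ n * V"
    if "j \<in> {1..<m}" for j
  proof -
    have "0 < real j / m" "real j / m < 1" using that by auto
    note lv = level[OF this]
    then show "{q \<in> A. real j / m \<le> g q} \<in> sets M" by blast
    show "emeasure M {q \<in> A. real j / m \<le> g q} < \<infinity>"
      using emeasure_mono[of "{q \<in> A. real j / m \<le> g q}" A M] A by auto
    have "1 - real j / m = real (m - j) / m" using that by (simp add: field_simps of_nat_diff)
    then show "measure M {q \<in> A. real j / m \<le> g q} = real (m - j) ^ n / real m ^ n * V"
      using lv unfolding V_def by (simp add: power_divide)
  qed
  have lower_integrable: "integrable M lower"
    unfolding lower_def using level_j by (intro integrable_divide integrable_sum) auto
  have "(\<integral>p. lower p \<partial>M) = (\<Sum>j\<in>{1..<m}. real (m - j) ^ n / real m ^ n * V) / real m"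
    unfolding lower_def using level_j by (simp add: integral_sum)
  also have "\<dots> = V * R"
    unfolding R_def using sum.atLeastLessThan_rev[of "\<lambda>i. real i ^ n" 1 m]
    by (simp add: sum_divide_distrib[symmetric] sum_distrib_left field_simps)
  finally have lower_integral: "(\<integral>p. lower p \<partial>M) = V * R" .
  have integral_eq: "(LINT p:A|M. g p) = (\<integral>p. indicator A p * g p \<partial>M)"
    unfolding set_lebesgue_integral_def by simp
  note sandwich = level_indicator_sum_bounds[where A=A and g=g, OF g_range m, folded lower_def]
  have "V * R \<le> (LINT p:A|M. g p)"
    unfolding integral_eq lower_integral[symmetric] using lower_integrable g sandwich
    by (intro integral_mono) (auto simp: set_integrable_def)
  moreover have "(LINT p:A|M. g p) \<le> V * R + V / m"
  proof -
    have "(LINT p:A|M. g p) \<le> (\<integral>p. lower p + indicator A p / m \<partial>M)"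
      unfolding integral_eq using lower_integrable g sandwich A
      by (intro integral_mono) (auto simp: set_integrable_def)
    also have "\<dots> = V * R + V / m"
      using lower_integrable A by (simp add: lower_integral V_def)
    finally show ?thesis .
  qed
  moreover have "R \<le> 1 / (n + 1)" "1 / (n + 1) \<le> R + 1 / m"
    using power_sum_bounds[where M=m and n=n] m unfolding R_def by (simp_all add: field_simps)
  then have "V * R \<le> V / (n + 1)" "V / (n + 1) \<le> V * R + V / m"
    using mult_left_mono[of _ _ V] measure_nonneg[of M A] unfolding V_def
    by (fastforce simp: distrib_left)+
  ultimately show ?thesis unfolding V_def by linarith
qed

lemma set_integral_from_level_measures:
  fixes g :: "'a \<Rightarrow> real"
  assumes A: "A \<in> sets M" "emeasure M A < \<infinity>"
    and g: "set_integrable M A g"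
    and g_range: "\<And>p. p \<in> A \<Longrightarrow> 0 \<le> g p \<and> g p \<le> 1"
    and level: "\<And>t. 0 < t \<Longrightarrow> t < 1 \<Longrightarrow>
      {p \<in> A. t \<le> g p} \<in> sets M \<and> measure M {p \<in> A. t \<le> g p} = (1 - t) ^ n * measure M A"
  shows "(LINT p:A|M. g p) = measure M A / (n + 1)"
proof -
  define V where "V = measure M A"
  have "\<bar>(LINT p:A|M. g p) - V / (n + 1)\<bar> \<le> 0"
  proof (rule field_le_epsilon)
    fix e :: real assume "0 < e"
    obtain m :: nat where m: "V / e < m" using reals_Archimedean2 by blast
    moreover have "0 \<le> V / e" using \<open>0 < e\<close> unfolding V_def by simp
    ultimately have "0 < real m" by linarith
    have "V < e * m" using m \<open>0 < e\<close> by (simp add: pos_divide_less_eq mult.commute)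
    with \<open>0 < real m\<close> have "1 \<le> m" "V / m \<le> e" by (auto simp: pos_divide_le_eq)
    with set_integral_level_measures_approx[OF assms, of m]
    show "\<bar>(LINT p:A|M. g p) - V / (n + 1)\<bar> \<le> 0 + e" unfolding V_def by linarith
  qed
  then show ?thesis unfolding V_def by simp
qed

lemma sum_subsets_swap:
  assumes "finite N" "\<And>K. K \<in> \<K> \<Longrightarrow> K \<subseteq> N"
  shows "(\<Sum>K\<in>\<K>. \<Sum>i\<in>K. g K i) = (\<Sum>i\<in>N. \<Sum>K | K \<in> \<K> \<and> i \<in> K. g K i)"
proof -
  have "finite \<K>" using assms by (meson Pow_iff finite_Pow_iff finite_subset subsetI)
  have "(\<Sum>K\<in>\<K>. \<Sum>i\<in>K. g K i) = (\<Sum>K\<in>\<K>. \<Sum>i | i \<in> N \<and> i \<in> K. g K i)"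
    using assms(2) by (intro sum.cong refl) (auto intro: arg_cong[where f="\<lambda>A. sum _ A"])
  also have "\<dots> = (\<Sum>i\<in>N. \<Sum>K | K \<in> \<K> \<and> i \<in> K. g K i)"
    by (rule sum.swap_restrict[OF \<open>finite \<K>\<close> assms(1)])
  finally show ?thesis .
qed

lemma card_subsets_containing:
  assumes "finite N" "i \<in> N" "1 \<le> k"
  shows "card {K. K \<subseteq> N \<and> card K = k \<and> i \<in> K} = (card N - 1) choose (k - 1)"
proof -
  have "{K. K \<subseteq> N \<and> card K = k \<and> i \<in> K} = insert i ` {L. L \<subseteq> N - {i} \<and> card L = k - 1}"
  proof (intro equalityI subsetI)
    fix K assume K: "K \<in> {K. K \<subseteq> N \<and> card K = k \<and> i \<in> K}"
    then have "finite K" using assms(1) finite_subset by blast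
    with K show "K \<in> insert i ` {L. L \<subseteq> N - {i} \<and> card L = k - 1}"
      by (intro image_eqI[of _ _ "K - {i}"]) auto
  next
    fix K assume "K \<in> insert i ` {L. L \<subseteq> N - {i} \<and> card L = k - 1}"
    then obtain L where L: "L \<subseteq> N - {i}" "card L = k - 1" "K = insert i L" by blast
    then have "finite L" "i \<notin> L" using assms(1) finite_subset by blast+
    with L assms show "K \<in> {K. K \<subseteq> N \<and> card K = k \<and> i \<in> K}" by auto
  qed
  moreover have "inj_on (insert i) {L. L \<subseteq> N - {i} \<and> card L = k - 1}"
    by (rule inj_onI) blast
  ultimately show ?thesis
    using assms by (simp add: card_image n_subsets)
qed

lemma sum_subsets_card:
  assumes "finite N" "1 \<le> k"
  shows "(\<Sum>K | K \<subseteq> N \<and> card K = k. \<Sum>i\<in>K. h i)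
    = of_nat ((card N - 1) choose (k - 1)) * (\<Sum>i\<in>N. h i)"
proof -
  have "(\<Sum>K | K \<subseteq> N \<and> card K = k. \<Sum>i\<in>K. h i)
      = (\<Sum>i\<in>N. \<Sum>K | K \<in> {K. K \<subseteq> N \<and> card K = k} \<and> i \<in> K. h i)"
    using assms(1) by (rule sum_subsets_swap) blast
  also have "\<dots> = (\<Sum>i\<in>N. of_nat ((card N - 1) choose (k - 1)) * h i)"
    using card_subsets_containing[OF assms(1) _ assms(2)] by (intro sum.cong refl) (simp add: conj_assoc)
  finally show ?thesis by (simp add: sum_distrib_left)
qed

lemma convex_on_sum_two_families:
  fixes y :: "'i \<Rightarrow> 'a::real_vector" and z :: "'j \<Rightarrow> 'a"
  assumes f: "convex_on C f" and fin: "finite I" "finite J"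
    and weights: "\<And>i. i \<in> I \<Longrightarrow> 0 \<le> a i" "\<And>j. j \<in> J \<Longrightarrow> 0 \<le> b j"
      "sum a I + sum b J = 1"
    and points: "\<And>i. i \<in> I \<Longrightarrow> y i \<in> C" "\<And>j. j \<in> J \<Longrightarrow> z j \<in> C"
  shows "f ((\<Sum>i\<in>I. a i *\<^sub>R y i) + (\<Sum>j\<in>J. b j *\<^sub>R z j))
    \<le> (\<Sum>i\<in>I. a i * f (y i)) + (\<Sum>j\<in>J. b j * f (z j))"
proof -
  let ?c = "case_sum a b" and ?p = "case_sum y z"
  have "f (\<Sum>l\<in>I <+> J. ?c l *\<^sub>R ?p l) \<le> (\<Sum>l\<in>I <+> J. ?c l * f (?p l))"
    using fin weights points by (intro convex_on_sum[OF _ _ f]) (auto simp: sum.Plus)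
  then show ?thesis using fin by (simp add: sum.Plus comp_def)
qed

lemma set_integrable_bounded_continuous_on_interior:
  fixes g :: "'a::euclidean_space \<Rightarrow> real"
  assumes S: "S \<in> lmeasurable" "negligible (S - interior S)"
    and g: "continuous_on (interior S) g" "\<And>p. p \<in> S \<Longrightarrow> \<bar>g p\<bar> \<le> B"
  shows "set_integrable lebesgue S g"
proof -
  have "g \<in> borel_measurable (lebesgue_on (interior S))"
    using g(1) by (intro continuous_imp_measurable_on_sets_lebesgue) auto
  then have "g measurable_on interior S"
    by (simp add: measurable_on_iff_borel_measurable)
  then have "g measurable_on S"
    by (rule measurable_on_spike_set) (use S interior_subset[of S] in \<open>simp add: Un_absorb1\<close>)
  then have "g \<in> borel_measurable (lebesgue_on S)"
    using S by (simp add: measurable_on_iff_borel_measurable fmeasurableD)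
  then show ?thesis
    using S g(2) by (intro measurable_bounded_by_integrable_imp_absolutely_integrable[where g="\<lambda>_. B"])
      (auto intro: integrable_on_const)
qed

lemma binomial_absorption_pred:
  assumes "1 \<le> k"
  shows "real (n choose (k - 1)) * real (n + 1) = real k * real ((n + 1) choose k)"
proof -
  have "Suc n * (n choose (k - 1)) = k * (Suc n choose k)"
    using Suc_times_binomial[of "k - 1" n] assms by simp
  then have "real (Suc n * (n choose (k - 1))) = real (k * (Suc n choose k))"
    by (simp only:)
  then show ?thesis by (simp add: algebra_simps)
qed

locale simplex =
  fixes x :: "nat \<Rightarrow> 'a::euclidean_space" and n :: nat
  assumes dim: "DIM('a) = n" and inj: "inj_on x {0..n}"
    and indep: "\<not> affine_dependent (x ` {0..n})"
begin

definition \<Delta> :: "'a set" where "\<Delta> = convex hull (x ` {0..n})"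

lemma n_ge_1: "1 \<le> n"
  using dim DIM_positive[where 'a='a] by simp

lemma weights_on_vertices:
  obtains v where "\<And>i. i \<in> {0..n} \<Longrightarrow> v (x i) = u i"
  using inv_into_f_f[OF inj] by (metis comp_apply)

lemma mem_simplex_iff:
  "p \<in> \<Delta> \<longleftrightarrow> (\<exists>u. (\<forall>i\<in>{0..n}. 0 \<le> u i) \<and> sum u {0..n} = 1 \<and> (\<Sum>i\<in>{0..n}. u i *\<^sub>R x i) = p)"
proof -
  have "p \<in> \<Delta> \<longleftrightarrow> (\<exists>v. (\<forall>y\<in>x ` {0..n}. 0 \<le> v y) \<and> sum v (x ` {0..n}) = 1
      \<and> (\<Sum>y\<in>x ` {0..n}. v y *\<^sub>R y) = p)"
    unfolding \<Delta>_def by (simp add: convex_hull_finite)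
  also have "\<dots> \<longleftrightarrow> (\<exists>u. (\<forall>i\<in>{0..n}. 0 \<le> u i) \<and> sum u {0..n} = 1 \<and> (\<Sum>i\<in>{0..n}. u i *\<^sub>R x i) = p)"
  proof
    assume "\<exists>v. (\<forall>y\<in>x ` {0..n}. 0 \<le> v y) \<and> sum v (x ` {0..n}) = 1 \<and> (\<Sum>y\<in>x ` {0..n}. v y *\<^sub>R y) = p"
    then obtain v where "\<forall>y\<in>x ` {0..n}. 0 \<le> v y" "sum v (x ` {0..n}) = 1"
      "(\<Sum>y\<in>x ` {0..n}. v y *\<^sub>R y) = p" by blast
    then show "\<exists>u. (\<forall>i\<in>{0..n}. 0 \<le> u i) \<and> sum u {0..n} = 1 \<and> (\<Sum>i\<in>{0..n}. u i *\<^sub>R x i) = p"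
      by (intro exI[of _ "v \<circ> x"]) (simp add: sum.reindex[OF inj])
  next
    assume "\<exists>u. (\<forall>i\<in>{0..n}. 0 \<le> u i) \<and> sum u {0..n} = 1 \<and> (\<Sum>i\<in>{0..n}. u i *\<^sub>R x i) = p"
    then obtain u where u: "\<forall>i\<in>{0..n}. 0 \<le> u i" "sum u {0..n} = 1" "(\<Sum>i\<in>{0..n}. u i *\<^sub>R x i) = p"
      by blast
    obtain v where v: "\<And>i. i \<in> {0..n} \<Longrightarrow> v (x i) = u i"
      using weights_on_vertices[where u=u] by blast
    show "\<exists>v. (\<forall>y\<in>x ` {0..n}. 0 \<le> v y) \<and> sum v (x ` {0..n}) = 1 \<and> (\<Sum>y\<in>x ` {0..n}. v y *\<^sub>R y) = p"
      using u v by (intro exI[of _ v]) (simp add: sum.reindex[OF inj])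
  qed
  finally show ?thesis .
qed

lemma barycentric_unique:
  assumes "sum u {0..n} = 1" "sum w {0..n} = 1"
    and "(\<Sum>i\<in>{0..n}. u i *\<^sub>R x i) = (\<Sum>i\<in>{0..n}. w i *\<^sub>R x i)" and "i \<in> {0..n}"
  shows "u i = w i"
proof (rule ccontr)
  assume "u i \<noteq> w i"
  obtain v where v: "\<And>j. j \<in> {0..n} \<Longrightarrow> v (x j) = u j - w j"
    using weights_on_vertices[where u="\<lambda>j. u j - w j"] by blast
  have "sum v (x ` {0..n}) = 0"
    using assms(1,2) v by (simp add: sum.reindex[OF inj] sum_subtractf)
  moreover have "(\<Sum>y\<in>x ` {0..n}. v y *\<^sub>R y) = 0"
    using assms(3) v by (simp add: sum.reindex[OF inj] scaleR_diff_left sum_subtractf)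
  moreover have "\<exists>y\<in>x ` {0..n}. v y \<noteq> 0"
    using \<open>u i \<noteq> w i\<close> assms(4) v by force
  ultimately have "affine_dependent (x ` {0..n})"
    by (auto simp: affine_dependent_explicit_finite)
  with indep show False by contradiction
qed

definition bary_coord :: "'a \<Rightarrow> nat \<Rightarrow> real" where
  "bary_coord p = (SOME u. (\<forall>i\<in>{0..n}. 0 \<le> u i) \<and> sum u {0..n} = 1 \<and> (\<Sum>i\<in>{0..n}. u i *\<^sub>R x i) = p)"

lemma
  assumes "p \<in> \<Delta>"
  shows bary_coord_nonneg: "\<And>i. i \<in> {0..n} \<Longrightarrow> 0 \<le> bary_coord p i"
    and bary_coord_sum: "sum (bary_coord p) {0..n} = 1"
    and bary_coord_combination: "(\<Sum>i\<in>{0..n}. bary_coord p i *\<^sub>R x i) = p"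
  using someI_ex[OF assms[unfolded mem_simplex_iff]] unfolding bary_coord_def by blast+

lemma bary_coord_eqI:
  assumes "\<And>i. i \<in> {0..n} \<Longrightarrow> 0 \<le> u i" "sum u {0..n} = 1" "(\<Sum>i\<in>{0..n}. u i *\<^sub>R x i) = p"
    and "i \<in> {0..n}"
  shows "bary_coord p i = u i"
proof -
  have "p \<in> \<Delta>" using assms(1-3) mem_simplex_iff by blast
  show ?thesis
    using barycentric_unique[OF bary_coord_sum[OF \<open>p \<in> \<Delta>\<close>] assms(2) _ assms(4)]
      bary_coord_combination[OF \<open>p \<in> \<Delta>\<close>] assms(3) by simp
qed

lemma bary_coord_le_1:
  assumes "p \<in> \<Delta>" "i \<in> {0..n}"
  shows "bary_coord p i \<le> 1"
  using member_le_sum[of i "{0..n}" "bary_coord p"] bary_coord_nonneg[OF assms(1)] bary_coord_sum[OF assms(1)]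
    assms(2) by simp

lemma bary_coord_convex_combination:
  assumes "p \<in> \<Delta>" "q \<in> \<Delta>" "0 \<le> a" "0 \<le> b" "a + b = 1" "i \<in> {0..n}"
  shows "bary_coord (a *\<^sub>R p + b *\<^sub>R q) i = a * bary_coord p i + b * bary_coord q i"
proof (rule bary_coord_eqI)
  show "(\<Sum>i\<in>{0..n}. (a * bary_coord p i + b * bary_coord q i) *\<^sub>R x i) = a *\<^sub>R p + b *\<^sub>R q"
  proof -
    have "a *\<^sub>R p + b *\<^sub>R q
        = a *\<^sub>R (\<Sum>i\<in>{0..n}. bary_coord p i *\<^sub>R x i) + b *\<^sub>R (\<Sum>i\<in>{0..n}. bary_coord q i *\<^sub>R x i)"
      using assms(1,2) by (simp add: bary_coord_combination)
    then show ?thesis by (simp add: scaleR_add_left sum.distrib scaleR_sum_right)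
  qed
  show "0 \<le> a * bary_coord p j + b * bary_coord q j" if "j \<in> {0..n}" for j
    using assms(1-4) bary_coord_nonneg that by simp
  show "(\<Sum>j\<in>{0..n}. a * bary_coord p j + b * bary_coord q j) = 1"
    using assms(1,2,5) by (simp add: sum.distrib bary_coord_sum flip: sum_distrib_left)
qed (fact assms)

lemma vertex_in_simplex: "i \<in> {0..n} \<Longrightarrow> x i \<in> \<Delta>"
  unfolding \<Delta>_def by (simp add: hull_inc)

lemma convex_simplex: "convex \<Delta>"
  unfolding \<Delta>_def by simp

lemma compact_simplex: "compact \<Delta>"
  unfolding \<Delta>_def by (simp add: compact_convex_hull finite_imp_compact)

lemma lmeasurable_simplex: "\<Delta> \<in> lmeasurable"
  by (simp add: compact_simplex lmeasurable_compact)

lemma measure_simplex_pos: "0 < measure lebesgue \<Delta>"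
proof -
  have "card (x ` {0..n}) = Suc DIM('a)" using card_image[OF inj] dim by simp
  then have "interior \<Delta> \<noteq> {}"
    unfolding \<Delta>_def using indep interior_convex_hull_eq_empty by blast
  then have "\<not> negligible \<Delta>"
    using open_not_negligible negligible_subset[OF _ interior_subset] by blast
  then have "measure lebesgue \<Delta> \<noteq> 0"
    using negligible_iff_measure0[OF lmeasurable_simplex] by simp
  then show ?thesis using measure_nonneg[of lebesgue \<Delta>] by linarith
qed

lemma centroid_split:
  assumes "p \<in> \<Delta>"
  obtains q where "q \<in> \<Delta>"
    and "(\<Sum>i\<in>{0..n}. (1 / (n + 1)) *\<^sub>R x i) = (1 / (n + 1)) *\<^sub>R p + (n / (n + 1)) *\<^sub>R q"
proof
  define q where "q = (\<Sum>i\<in>{0..n}. ((1 - bary_coord p i) / n) *\<^sub>R x i)"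
  have "(\<Sum>i\<in>{0..n}. (1 - bary_coord p i) / n) = 1"
    using n_ge_1 bary_coord_sum[OF assms] by (simp add: sum_subtractf flip: sum_divide_distrib)
  then show "q \<in> \<Delta>"
    unfolding q_def mem_simplex_iff using bary_coord_le_1[OF assms]
    by (intro exI[of _ "\<lambda>i. (1 - bary_coord p i) / n"]) auto
  have "(1 / (n + 1)) *\<^sub>R p = (1 / (n + 1)) *\<^sub>R (\<Sum>i\<in>{0..n}. bary_coord p i *\<^sub>R x i)"
    by (simp add: bary_coord_combination[OF assms])
  then have "(1 / (n + 1)) *\<^sub>R p + (n / (n + 1)) *\<^sub>R q
      = (\<Sum>i\<in>{0..n}. (bary_coord p i / (n + 1) + (1 - bary_coord p i) / (n + 1)) *\<^sub>R x i)"
    using n_ge_1 by (simp add: q_def scaleR_sum_right scaleR_add_left sum.distrib)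
  also have "\<dots> = (\<Sum>i\<in>{0..n}. (1 / (n + 1)) *\<^sub>R x i)"
    by (simp add: add_divide_distrib[symmetric])
  finally show "(\<Sum>i\<in>{0..n}. (1 / (n + 1)) *\<^sub>R x i) = (1 / (n + 1)) *\<^sub>R p + (n / (n + 1)) *\<^sub>R q" ..
qed

lemma convex_on_simplex_bounded:
  assumes g: "convex_on \<Delta> g"
  obtains B where "\<And>p. p \<in> \<Delta> \<Longrightarrow> \<bar>g p\<bar> \<le> B"
proof -
  define b where "b = (\<Sum>i\<in>{0..n}. \<bar>g (x i)\<bar>)"
  have upper: "g p \<le> b" if "p \<in> \<Delta>" for p
  proof -
    have "\<forall>y\<in>x ` {0..n}. g y \<le> b"
      unfolding b_def using member_le_sum[of _ "{0..n}" "\<lambda>i. \<bar>g (x i)\<bar>"] by fastforce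
    then show ?thesis
      using convex_on_convex_hull_bound[of "x ` {0..n}" g b] g that unfolding \<Delta>_def by blast
  qed
  define c where "c = (\<Sum>i\<in>{0..n}. (1 / (n + 1)) *\<^sub>R x i)"
  have "c \<in> \<Delta>"
    unfolding c_def mem_simplex_iff by (intro exI[of _ "\<lambda>_. 1 / (n + 1)"]) auto
  have lower: "(n + 1) * g c - n * b \<le> g p" if p: "p \<in> \<Delta>" for p
  proof -
    obtain q where q: "q \<in> \<Delta>" "c = (1 / (n + 1)) *\<^sub>R p + (n / (n + 1)) *\<^sub>R q"
      using centroid_split[OF p] unfolding c_def by blast
    have "g c \<le> (1 / (n + 1)) * g p + (n / (n + 1)) * g q"
      using convex_onD[OF g, of "n / (n + 1)" p q] p q by (simp add: field_simps)
    also have "\<dots> \<le> (1 / (n + 1)) * g p + (n / (n + 1)) * b"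
      using upper[OF q(1)] by (intro add_left_mono mult_left_mono) auto
    finally have "real (n + 1) * g c \<le> real (n + 1) * ((1 / (n + 1)) * g p + (n / (n + 1)) * b)"
      by (intro mult_left_mono) auto
    then show ?thesis by (simp add: distrib_left)
  qed
  show ?thesis
    using upper lower by (intro that[of "\<bar>(n + 1) * g c - n * b\<bar> + \<bar>b\<bar>"]) fastforce
qed

lemma convex_on_simplex_integrable:
  assumes g: "convex_on \<Delta> g"
  shows "set_integrable lebesgue \<Delta> g"
proof -
  obtain B where B: "\<And>p. p \<in> \<Delta> \<Longrightarrow> \<bar>g p\<bar> \<le> B"
    using convex_on_simplex_bounded[OF g] by blast
  have "continuous_on (interior \<Delta>) g"
    using B interior_subset[of \<Delta>] convex_interior[OF convex_simplex]
    by (intro convex_on_bounded_continuous[where b=B] convex_on_subset[OF g]) auto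
  moreover have "negligible (\<Delta> - interior \<Delta>)"
    using negligible_convex_frontier[OF convex_simplex] compact_imp_closed[OF compact_simplex]
    by (simp add: frontier_def closure_closed)
  ultimately show ?thesis
    using B lmeasurable_simplex by (intro set_integrable_bounded_continuous_on_interior)
qed

definition min_coord :: "nat set \<Rightarrow> 'a \<Rightarrow> real" where
  "min_coord K p = Min (bary_coord p ` K)"

lemma min_coord_ge_iff: "finite K \<Longrightarrow> K \<noteq> {} \<Longrightarrow> t \<le> min_coord K p \<longleftrightarrow> (\<forall>i\<in>K. t \<le> bary_coord p i)"
  unfolding min_coord_def by simp

lemma min_coord_le: "finite K \<Longrightarrow> i \<in> K \<Longrightarrow> min_coord K p \<le> bary_coord p i"
  unfolding min_coord_def by simp

lemma min_coord_singleton: "min_coord {i} p = bary_coord p i"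
  unfolding min_coord_def by simp

lemma min_coord_nonneg:
  assumes "p \<in> \<Delta>" "K \<subseteq> {0..n}" "K \<noteq> {}"
  shows "0 \<le> min_coord K p"
  using assms bary_coord_nonneg finite_subset[OF assms(2)] by (subst min_coord_ge_iff) auto

lemma card_mult_min_coord_le_1:
  assumes p: "p \<in> \<Delta>" and K: "K \<subseteq> {0..n}"
  shows "card K * min_coord K p \<le> 1"
proof -
  have "finite K" using K finite_subset by blast
  then have "card K * min_coord K p = (\<Sum>i\<in>K. min_coord K p)" by simp
  also have "\<dots> \<le> (\<Sum>i\<in>K. bary_coord p i)"
    using \<open>finite K\<close> by (intro sum_mono min_coord_le)
  also have "\<dots> \<le> (\<Sum>i\<in>{0..n}. bary_coord p i)"
    using K bary_coord_nonneg[OF p] by (intro sum_mono2) auto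
  finally show ?thesis using bary_coord_sum[OF p] by simp
qed

lemma concave_min_coord:
  assumes "K \<subseteq> {0..n}" "K \<noteq> {}"
  shows "convex_on \<Delta> (\<lambda>p. - min_coord K p)"
  unfolding convex_on_def
proof (intro conjI convex_simplex ballI allI impI)
  fix p q u v assume pq: "p \<in> \<Delta>" "q \<in> \<Delta>" and uv: "0 \<le> (u::real)" "0 \<le> (v::real)" "u + v = 1"
  have "finite K" using assms(1) finite_subset by blast
  have "u * min_coord K p + v * min_coord K q \<le> min_coord K (u *\<^sub>R p + v *\<^sub>R q)"
  proof (subst min_coord_ge_iff[OF \<open>finite K\<close> assms(2)], intro ballI)
    fix i assume "i \<in> K"
    then have "u * min_coord K p + v * min_coord K q \<le> u * bary_coord p i + v * bary_coord q i"
      using min_coord_le[OF \<open>finite K\<close>] uv by (intro add_mono mult_left_mono) auto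
    also have "\<dots> = bary_coord (u *\<^sub>R p + v *\<^sub>R q) i"
      using bary_coord_convex_combination[OF pq uv] \<open>i \<in> K\<close> assms(1) by auto
    finally show "u * min_coord K p + v * min_coord K q \<le> bary_coord (u *\<^sub>R p + v *\<^sub>R q) i" .
  qed
  then show "- min_coord K (u *\<^sub>R p + v *\<^sub>R q) \<le> u * - min_coord K p + v * - min_coord K q"
    by simp
qed

lemma min_coord_integrable:
  assumes "K \<subseteq> {0..n}" "K \<noteq> {}"
  shows "set_integrable lebesgue \<Delta> (min_coord K)"
  using set_integrable_mult_right[of "-1", OF convex_on_simplex_integrable[OF concave_min_coord[OF assms]]]
  by simp

lemma vertex_weights_on_subset:
  fixes t :: real
  assumes "K \<subseteq> {0..n}"
  shows "(\<Sum>i\<in>{0..n}. if i \<in> K then t else 0) = card K * t"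
    and "(\<Sum>i\<in>{0..n}. (if i \<in> K then t else 0) *\<^sub>R x i) = t *\<^sub>R (\<Sum>i\<in>K. x i)"
proof -
  show "(\<Sum>i\<in>{0..n}. if i \<in> K then t else 0) = card K * t"
    using sum.inter_restrict[of "{0..n}" "\<lambda>_. t" K] assms by (simp add: Int_absorb1)
  have "(\<Sum>i\<in>{0..n}. (if i \<in> K then t else 0) *\<^sub>R x i) = (\<Sum>i\<in>{0..n}. if i \<in> K then t *\<^sub>R x i else 0)"
    by (rule sum.cong) auto
  then show "(\<Sum>i\<in>{0..n}. (if i \<in> K then t else 0) *\<^sub>R x i) = t *\<^sub>R (\<Sum>i\<in>K. x i)"
    using sum.inter_restrict[of "{0..n}" "\<lambda>i. t *\<^sub>R x i" K] assms
    by (simp add: Int_absorb1 scaleR_sum_right)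
qed

lemma bary_coord_homothety:
  fixes t :: real
  assumes p: "p \<in> \<Delta>" and K: "K \<subseteq> {0..n}" and t: "0 \<le> t" "card K * t \<le> 1"
  defines "q \<equiv> (1 - card K * t) *\<^sub>R p + t *\<^sub>R (\<Sum>i\<in>K. x i)"
  shows "q \<in> \<Delta>"
    and "\<And>i. i \<in> {0..n} \<Longrightarrow> bary_coord q i = (1 - card K * t) * bary_coord p i + (if i \<in> K then t else 0)"
proof -
  define v where "v i = (1 - card K * t) * bary_coord p i + (if i \<in> K then t else 0)" for i
  have v_nonneg: "\<And>i. i \<in> {0..n} \<Longrightarrow> 0 \<le> v i"
    using bary_coord_nonneg[OF p] t unfolding v_def by auto
  have v_sum: "sum v {0..n} = 1"
    using bary_coord_sum[OF p] vertex_weights_on_subset(1)[OF K]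
    by (simp add: v_def sum.distrib flip: sum_distrib_left)
  have "(1 - card K * t) *\<^sub>R p = (1 - card K * t) *\<^sub>R (\<Sum>i\<in>{0..n}. bary_coord p i *\<^sub>R x i)"
    by (simp add: bary_coord_combination[OF p])
  then have v_comb: "(\<Sum>i\<in>{0..n}. v i *\<^sub>R x i) = q"
    by (simp add: q_def v_def scaleR_add_left sum.distrib scaleR_sum_right vertex_weights_on_subset(2)[OF K])
  show "q \<in> \<Delta>" using v_nonneg v_sum v_comb mem_simplex_iff by blast
  show "bary_coord q i = (1 - card K * t) * bary_coord p i + (if i \<in> K then t else 0)" if "i \<in> {0..n}" for i
    using bary_coord_eqI[OF v_nonneg v_sum v_comb that] by (simp add: v_def)
qed

lemma level_set_in_homothety:
  fixes t :: real
  assumes q: "q \<in> \<Delta>" and K: "K \<subseteq> {0..n}" and qt: "\<And>i. i \<in> K \<Longrightarrow> t \<le> bary_coord q i"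
    and t: "card K * t < 1"
  obtains p where "p \<in> \<Delta>" "q = (1 - card K * t) *\<^sub>R p + t *\<^sub>R (\<Sum>i\<in>K. x i)"
proof
  define c where "c = 1 - card K * t"
  define u where "u i = (bary_coord q i - (if i \<in> K then t else 0)) / c" for i
  define p where "p = (\<Sum>i\<in>{0..n}. u i *\<^sub>R x i)"
  have "c > 0" using t unfolding c_def by simp
  have "\<forall>i\<in>{0..n}. 0 \<le> u i"
    using bary_coord_nonneg[OF q] qt \<open>c > 0\<close> unfolding u_def by auto
  moreover have "sum u {0..n} = 1"
    using bary_coord_sum[OF q] vertex_weights_on_subset(1)[OF K] \<open>c > 0\<close> unfolding u_def c_def
    by (simp add: sum_subtractf flip: sum_divide_distrib)
  ultimately show "p \<in> \<Delta>" unfolding p_def mem_simplex_iff by blast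
  have "c *\<^sub>R p = (\<Sum>i\<in>{0..n}. bary_coord q i *\<^sub>R x i) - (\<Sum>i\<in>{0..n}. (if i \<in> K then t else 0) *\<^sub>R x i)"
    using \<open>c > 0\<close> by (simp add: p_def u_def scaleR_sum_right scaleR_diff_left sum_subtractf)
  then show "q = (1 - card K * t) *\<^sub>R p + t *\<^sub>R (\<Sum>i\<in>K. x i)"
    by (simp add: c_def bary_coord_combination[OF q] vertex_weights_on_subset(2)[OF K])
qed

lemma min_coord_level_set:
  fixes t :: real
  assumes K: "K \<subseteq> {0..n}" "K \<noteq> {}" and t: "0 \<le> t" "card K * t < 1"
  shows "{p \<in> \<Delta>. t \<le> min_coord K p} = (\<lambda>p. (1 - card K * t) *\<^sub>R p + t *\<^sub>R (\<Sum>i\<in>K. x i)) ` \<Delta>"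
proof -
  have "finite K" using K(1) finite_subset by blast
  note level_iff = min_coord_ge_iff[OF \<open>finite K\<close> K(2)]
  show ?thesis
  proof (intro equalityI subsetI)
    fix q assume "q \<in> {p \<in> \<Delta>. t \<le> min_coord K p}"
    then show "q \<in> (\<lambda>p. (1 - card K * t) *\<^sub>R p + t *\<^sub>R (\<Sum>i\<in>K. x i)) ` \<Delta>"
      using level_set_in_homothety[OF _ K(1) _ t(2)] level_iff by (metis (mono_tags, lifting) imageI mem_Collect_eq)
  next
    fix q assume "q \<in> (\<lambda>p. (1 - card K * t) *\<^sub>R p + t *\<^sub>R (\<Sum>i\<in>K. x i)) ` \<Delta>"
    then obtain p where p: "p \<in> \<Delta>" and q: "q = (1 - card K * t) *\<^sub>R p + t *\<^sub>R (\<Sum>i\<in>K. x i)"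
      by blast
    have "t \<le> bary_coord q i" if "i \<in> K" for i
      using bary_coord_homothety(2)[OF p K(1) t(1)] bary_coord_nonneg[OF p] t that K(1) q
      by (fastforce intro: add_nonneg_nonneg)
    then show "q \<in> {p \<in> \<Delta>. t \<le> min_coord K p}"
      using bary_coord_homothety(1)[OF p K(1) t(1)] t(2) q level_iff by auto
  qed
qed

lemma min_coord_level_set_measure:
  fixes t :: real
  assumes K: "K \<subseteq> {0..n}" "K \<noteq> {}" and t: "0 \<le> t" "card K * t < 1"
  shows "{p \<in> \<Delta>. t \<le> min_coord K p} \<in> lmeasurable"
    and "measure lebesgue {p \<in> \<Delta>. t \<le> min_coord K p} = (1 - card K * t) ^ n * measure lebesgue \<Delta>"
proof -
  have "compact ((\<lambda>p. (1 - card K * t) *\<^sub>R p + t *\<^sub>R (\<Sum>i\<in>K. x i)) ` \<Delta>)"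
    by (intro compact_continuous_image compact_simplex continuous_intros)
  then show "{p \<in> \<Delta>. t \<le> min_coord K p} \<in> lmeasurable"
    unfolding min_coord_level_set[OF assms] by (rule lmeasurable_compact)
  show "measure lebesgue {p \<in> \<Delta>. t \<le> min_coord K p} = (1 - card K * t) ^ n * measure lebesgue \<Delta>"
    unfolding min_coord_level_set[OF assms] measure_lebesgue_affine dim using t by simp
qed

lemma set_integral_min_coord:
  assumes K: "K \<subseteq> {0..n}" "K \<noteq> {}"
  shows "(LINT p:\<Delta>|lebesgue. min_coord K p) = measure lebesgue \<Delta> / (card K * (n + 1))"
proof -
  define s where "s = real (card K)"
  have "0 < s" using K finite_subset unfolding s_def by fastforce
  have "(LINT p:\<Delta>|lebesgue. s * min_coord K p) = measure lebesgue \<Delta> / (n + 1)"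
  proof (rule set_integral_from_level_measures)
    show "\<Delta> \<in> sets lebesgue" "emeasure lebesgue \<Delta> < \<infinity>"
      using lmeasurable_simplex by (auto simp: fmeasurable_def)
    show "set_integrable lebesgue \<Delta> (\<lambda>p. s * min_coord K p)"
      by (intro set_integrable_mult_right min_coord_integrable K)
    show "0 \<le> s * min_coord K p \<and> s * min_coord K p \<le> 1" if "p \<in> \<Delta>" for p
      using min_coord_nonneg[OF that K] card_mult_min_coord_le_1[OF that K(1)] \<open>0 < s\<close>
      unfolding s_def by simp
    fix t :: real assume "0 < t" "t < 1"
    then have "0 \<le> t / s" "card K * (t / s) < 1" using \<open>0 < s\<close> unfolding s_def by auto
    moreover have "{p \<in> \<Delta>. t \<le> s * min_coord K p} = {p \<in> \<Delta>. t / s \<le> min_coord K p}"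
      using \<open>0 < s\<close> by (auto simp: field_simps)
    ultimately show "{p \<in> \<Delta>. t \<le> s * min_coord K p} \<in> sets lebesgue \<and>
        measure lebesgue {p \<in> \<Delta>. t \<le> s * min_coord K p} = (1 - t) ^ n * measure lebesgue \<Delta>"
      using min_coord_level_set_measure[OF K] \<open>0 < s\<close> unfolding s_def by (auto intro: fmeasurableD)
  qed
  then have "(LINT p:\<Delta>|lebesgue. min_coord K p) = measure lebesgue \<Delta> / (n + 1) / s"
    using \<open>0 < s\<close> by (simp add: eq_divide_eq ac_simps)
  then show ?thesis by (simp add: s_def divide_divide_eq_left algebra_simps)
qed

abbreviation vertex_subsets :: "nat \<Rightarrow> nat set set" where
  "vertex_subsets k \<equiv> {K. K \<subseteq> {0..n} \<and> card K = k}"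

lemma bary_in_simplex:
  assumes "K \<subseteq> {0..n}" "K \<noteq> {}"
  shows "bary x K \<in> \<Delta>"
proof -
  have "finite K" using assms(1) finite_subset by blast
  then have "(\<Sum>i\<in>K. (1 / card K) *\<^sub>R x i) \<in> \<Delta>"
    using assms vertex_in_simplex by (intro convex_sum convex_simplex) auto
  then show ?thesis by (simp add: bary_def scaleR_sum_right)
qed

lemma sum_min_coord_swap:
  fixes h :: "nat \<Rightarrow> 'b::real_vector"
  shows "(\<Sum>K\<in>vertex_subsets k. min_coord K p *\<^sub>R (\<Sum>i\<in>K. h i))
    = (\<Sum>i\<in>{0..n}. (\<Sum>K | K \<in> vertex_subsets k \<and> i \<in> K. min_coord K p) *\<^sub>R h i)"
proof -
  have "(\<Sum>K\<in>vertex_subsets k. min_coord K p *\<^sub>R (\<Sum>i\<in>K. h i))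
      = (\<Sum>K\<in>vertex_subsets k. \<Sum>i\<in>K. min_coord K p *\<^sub>R h i)"
    by (simp add: scaleR_sum_right)
  also have "\<dots> = (\<Sum>i\<in>{0..n}. \<Sum>K | K \<in> vertex_subsets k \<and> i \<in> K. min_coord K p *\<^sub>R h i)"
    by (rule sum_subsets_swap) auto
  finally show ?thesis by (simp add: scaleR_sum_left)
qed

lemma barycentric_decomposition:
  assumes k: "1 \<le> k" "k \<le> n + 1" and p: "p \<in> \<Delta>"
  defines "C \<equiv> real (n choose (k - 1))"
    and "w i \<equiv> bary_coord p i - (\<Sum>K | K \<in> vertex_subsets k \<and> i \<in> K. min_coord K p) / real (n choose (k - 1))"
  shows "\<And>i. i \<in> {0..n} \<Longrightarrow> 0 \<le> w i"
    and "(\<Sum>K\<in>vertex_subsets k. k * min_coord K p / C) + (\<Sum>i\<in>{0..n}. w i) = 1"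
    and "(\<Sum>K\<in>vertex_subsets k. (k * min_coord K p / C) *\<^sub>R bary x K) + (\<Sum>i\<in>{0..n}. w i *\<^sub>R x i) = p"
proof -
  have "0 < C" unfolding C_def using k by simp
  note w_def = w_def[folded C_def]
  have K: "finite K" "K \<noteq> {}" if "K \<in> vertex_subsets k" for K
    using that k finite_subset by fastforce+
  show "0 \<le> w i" if i: "i \<in> {0..n}" for i
  proof -
    have "(\<Sum>K | K \<in> vertex_subsets k \<and> i \<in> K. min_coord K p) \<le> (\<Sum>K | K \<in> vertex_subsets k \<and> i \<in> K. bary_coord p i)"
      using K by (intro sum_mono min_coord_le) auto
    also have "\<dots> = C * bary_coord p i"
      using card_subsets_containing[of "{0..n}" i k] i k(1) by (simp add: C_def conj_assoc)
    finally show ?thesis using \<open>0 < C\<close> by (simp add: w_def field_simps)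
  qed
  have "(\<Sum>K\<in>vertex_subsets k. min_coord K p *\<^sub>R (\<Sum>i\<in>K. 1::real))
      = (\<Sum>i\<in>{0..n}. (\<Sum>K | K \<in> vertex_subsets k \<and> i \<in> K. min_coord K p) *\<^sub>R 1)"
    by (rule sum_min_coord_swap)
  then have "(\<Sum>K\<in>vertex_subsets k. k * min_coord K p)
      = (\<Sum>i\<in>{0..n}. (\<Sum>K | K \<in> vertex_subsets k \<and> i \<in> K. min_coord K p))"
    by (simp add: mult.commute)
  then show "(\<Sum>K\<in>vertex_subsets k. k * min_coord K p / C) + (\<Sum>i\<in>{0..n}. w i) = 1"
    using bary_coord_sum[OF p] by (simp add: w_def sum_subtractf flip: sum_divide_distrib)
  have "(k * min_coord K p / C) *\<^sub>R bary x K = (1 / C) *\<^sub>R (min_coord K p *\<^sub>R (\<Sum>i\<in>K. x i))"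
    if "K \<in> vertex_subsets k" for K
    using that k by (simp add: bary_def)
  then have "(\<Sum>K\<in>vertex_subsets k. (k * min_coord K p / C) *\<^sub>R bary x K)
      = (1 / C) *\<^sub>R (\<Sum>K\<in>vertex_subsets k. min_coord K p *\<^sub>R (\<Sum>i\<in>K. x i))"
    by (simp add: scaleR_sum_right)
  also have "\<dots> = (\<Sum>i\<in>{0..n}. ((\<Sum>K | K \<in> vertex_subsets k \<and> i \<in> K. min_coord K p) / C) *\<^sub>R x i)"
    by (subst sum_min_coord_swap) (simp add: scaleR_sum_right)
  finally show "(\<Sum>K\<in>vertex_subsets k. (k * min_coord K p / C) *\<^sub>R bary x K) + (\<Sum>i\<in>{0..n}. w i *\<^sub>R x i) = p"
    using bary_coord_combination[OF p] by (simp add: w_def scaleR_diff_left sum_subtractf)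
qed

lemma convex_on_le_barycentric_bound:
  assumes f: "convex_on \<Delta> f" and k: "1 \<le> k" "k \<le> n + 1" and p: "p \<in> \<Delta>"
  shows "f p \<le> (\<Sum>i\<in>{0..n}. bary_coord p i * f (x i))
    + (\<Sum>K\<in>vertex_subsets k. min_coord K p * (k * f (bary x K) - (\<Sum>i\<in>K. f (x i))))
      / real (n choose (k - 1))"
proof -
  define C where "C = real (n choose (k - 1))"
  define m where "m i = (\<Sum>K | K \<in> vertex_subsets k \<and> i \<in> K. min_coord K p)" for i
  have "0 < C" unfolding C_def using k by simp
  have K: "K \<subseteq> {0..n}" "K \<noteq> {}" if "K \<in> vertex_subsets k" for K
    using that k by auto
  have "finite (vertex_subsets k)" by (rule finite_subset[of _ "Pow {0..n}"]) auto
  note decomposition = barycentric_decomposition[OF k p, folded C_def m_def]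
  have "f ((\<Sum>K\<in>vertex_subsets k. (k * min_coord K p / C) *\<^sub>R bary x K)
        + (\<Sum>i\<in>{0..n}. (bary_coord p i - m i / C) *\<^sub>R x i))
      \<le> (\<Sum>K\<in>vertex_subsets k. (k * min_coord K p / C) * f (bary x K))
        + (\<Sum>i\<in>{0..n}. (bary_coord p i - m i / C) * f (x i))"
    by (rule convex_on_sum_two_families[OF f \<open>finite (vertex_subsets k)\<close> finite_atLeastAtMost])
      (use decomposition min_coord_nonneg[OF p K] \<open>0 < C\<close> bary_in_simplex[OF K] vertex_in_simplex
        in auto)
  then have "f p \<le> (\<Sum>K\<in>vertex_subsets k. (k * min_coord K p / C) * f (bary x K))
      + (\<Sum>i\<in>{0..n}. (bary_coord p i - m i / C) * f (x i))"
    by (simp only: decomposition(3))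
  also have "(\<Sum>K\<in>vertex_subsets k. (k * min_coord K p / C) * f (bary x K))
      = (\<Sum>K\<in>vertex_subsets k. min_coord K p * (k * f (bary x K))) / C"
    by (simp add: sum_divide_distrib ac_simps)
  also have "(\<Sum>i\<in>{0..n}. (bary_coord p i - m i / C) * f (x i))
      = (\<Sum>i\<in>{0..n}. bary_coord p i * f (x i)) - (\<Sum>i\<in>{0..n}. m i * f (x i)) / C"
    by (simp add: left_diff_distrib sum_subtractf sum_divide_distrib)
  also have "(\<Sum>i\<in>{0..n}. m i * f (x i)) = (\<Sum>K\<in>vertex_subsets k. min_coord K p * (\<Sum>i\<in>K. f (x i)))"
    using sum_min_coord_swap[where k=k and p=p and h="\<lambda>i. f (x i)"] by (simp add: m_def)
  finally show ?thesis
    by (simp add: C_def right_diff_distrib sum_subtractf diff_divide_distrib)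
qed

lemma set_integral_bary_coord:
  assumes "i \<in> {0..n}"
  shows "set_integrable lebesgue \<Delta> (\<lambda>p. bary_coord p i)"
    and "(LINT p:\<Delta>|lebesgue. bary_coord p i) = measure lebesgue \<Delta> / (n + 1)"
proof -
  have "min_coord {i} = (\<lambda>p. bary_coord p i)" by (simp add: fun_eq_iff min_coord_singleton)
  then show "set_integrable lebesgue \<Delta> (\<lambda>p. bary_coord p i)"
      "(LINT p:\<Delta>|lebesgue. bary_coord p i) = measure lebesgue \<Delta> / (n + 1)"
    using min_coord_integrable[of "{i}"] set_integral_min_coord[of "{i}"] assms by simp_all
qed

lemma set_integral_coordinate_combination:
  fixes a :: "nat \<Rightarrow> real" and c :: "nat set \<Rightarrow> real"
  assumes k: "1 \<le> k"
  defines "h p \<equiv> (\<Sum>i\<in>{0..n}. a i * bary_coord p i) + (\<Sum>K\<in>vertex_subsets k. c K * min_coord K p)"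
  shows "set_integrable lebesgue \<Delta> h"
    and "(LINT p:\<Delta>|lebesgue. h p) = (\<Sum>i\<in>{0..n}. a i) * (measure lebesgue \<Delta> / (n + 1))
      + (\<Sum>K\<in>vertex_subsets k. c K) * (measure lebesgue \<Delta> / (k * (n + 1)))"
proof -
  have K: "K \<subseteq> {0..n}" "K \<noteq> {}" if "K \<in> vertex_subsets k" for K
    using that k by auto
  have vertex_terms: "\<And>i. i \<in> {0..n} \<Longrightarrow> set_integrable lebesgue \<Delta> (\<lambda>p. a i * bary_coord p i)"
    and subset_terms: "\<And>K. K \<in> vertex_subsets k \<Longrightarrow> set_integrable lebesgue \<Delta> (\<lambda>p. c K * min_coord K p)"
    using set_integral_bary_coord(1) min_coord_integrable[OF K] by (auto intro: set_integrable_mult_right)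
  then show "set_integrable lebesgue \<Delta> h"
    unfolding h_def by (intro set_integral_add(1) set_integrable_sum) auto
  have "(LINT p:\<Delta>|lebesgue. h p) = (LINT p:\<Delta>|lebesgue. \<Sum>i\<in>{0..n}. a i * bary_coord p i)
      + (LINT p:\<Delta>|lebesgue. \<Sum>K\<in>vertex_subsets k. c K * min_coord K p)"
    unfolding h_def using vertex_terms subset_terms by (intro set_integral_add(2) set_integrable_sum) auto
  also have "(LINT p:\<Delta>|lebesgue. \<Sum>i\<in>{0..n}. a i * bary_coord p i)
      = (\<Sum>i\<in>{0..n}. LINT p:\<Delta>|lebesgue. a i * bary_coord p i)"
    by (rule set_integral_sum) (rule vertex_terms)
  also have "\<dots> = (\<Sum>i\<in>{0..n}. a i) * (measure lebesgue \<Delta> / (n + 1))"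
    unfolding sum_distrib_right
    by (intro sum.cong refl) (simp add: set_integral_mult_right set_integral_bary_coord(2))
  also have "(LINT p:\<Delta>|lebesgue. \<Sum>K\<in>vertex_subsets k. c K * min_coord K p)
      = (\<Sum>K\<in>vertex_subsets k. LINT p:\<Delta>|lebesgue. c K * min_coord K p)"
    by (rule set_integral_sum) (rule subset_terms)
  also have "\<dots> = (\<Sum>K\<in>vertex_subsets k. c K) * (measure lebesgue \<Delta> / (k * (n + 1)))"
    unfolding sum_distrib_right
    by (intro sum.cong refl) (simp add: set_integral_mult_right set_integral_min_coord[OF K])
  finally show "(LINT p:\<Delta>|lebesgue. h p) = (\<Sum>i\<in>{0..n}. a i) * (measure lebesgue \<Delta> / (n + 1))
      + (\<Sum>K\<in>vertex_subsets k. c K) * (measure lebesgue \<Delta> / (k * (n + 1)))" .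
qed

lemma average_le_barycenter_vertex_mixture:
  assumes f: "convex_on \<Delta> f" and k: "1 \<le> k" "k \<le> n + 1"
  shows "Avg f \<Delta> \<le> (1 / k) * ((1 / real ((n + 1) choose k)) * (\<Sum>K\<in>vertex_subsets k. f (bary x K)))
    + (1 - 1 / k) * ((\<Sum>i\<in>{0..n}. f (x i)) / (n + 1))"
proof -
  define V where "V = measure lebesgue \<Delta>"
  define C where "C = real (n choose (k - 1))"
  define SB where "SB = (\<Sum>K\<in>vertex_subsets k. f (bary x K))"
  define SX where "SX = (\<Sum>i\<in>{0..n}. f (x i))"
  define c where "c K = (k * f (bary x K) - (\<Sum>i\<in>K. f (x i))) / C" for K
  define h where "h p = (\<Sum>i\<in>{0..n}. f (x i) * bary_coord p i) + (\<Sum>K\<in>vertex_subsets k. c K * min_coord K p)"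
    for p
  note h_integral = set_integral_coordinate_combination[OF k(1), where a="\<lambda>i. f (x i)" and c=c, folded h_def]
  have "0 < V" unfolding V_def by (rule measure_simplex_pos)
  have "0 < C" unfolding C_def using k by simp
  have "(\<Sum>K\<in>vertex_subsets k. \<Sum>i\<in>K. f (x i)) = C * SX"
    using sum_subsets_card[of "{0..n}" k "\<lambda>i. f (x i)"] k(1) by (simp add: C_def SX_def)
  then have sum_c: "(\<Sum>K\<in>vertex_subsets k. c K) = (k * SB - C * SX) / C"
    by (simp add: c_def SB_def sum_subtractf sum_distrib_left flip: sum_divide_distrib)
  have "(LINT p:\<Delta>|lebesgue. f p) \<le> (LINT p:\<Delta>|lebesgue. h p)"
  proof (rule set_integral_mono)
    show "set_integrable lebesgue \<Delta> f" by (rule convex_on_simplex_integrable[OF f])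
    show "set_integrable lebesgue \<Delta> h" by (rule h_integral(1))
    show "f p \<le> h p" if "p \<in> \<Delta>" for p
      using convex_on_le_barycentric_bound[OF f k that]
      by (simp add: h_def c_def C_def sum_divide_distrib ac_simps)
  qed
  also have "\<dots> = SX * (V / (n + 1)) + (k * SB - C * SX) / C * (V / (k * (n + 1)))"
    unfolding h_integral(2) sum_c by (simp add: SX_def V_def)
  also have "\<dots> = V * ((1 / k) * ((1 / real ((n + 1) choose k)) * SB) + (1 - 1 / k) * (SX / (n + 1)))"
  proof -
    have "SX * (V / m) + (k * SB - C * SX) / C * (V / (k * m))
        = V * ((1 / k) * ((1 / Ck) * SB) + (1 - 1 / k) * (SX / m))"
      if "0 < m" "0 < Ck" "C * m = k * Ck" for m Ck :: real
    proof -
      have "(k * SB - C * SX) / C * (V / (k * m)) = V * SB / (C * m) - V * SX / (k * m)"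
        using \<open>0 < C\<close> k(1) \<open>0 < m\<close> by (simp add: field_simps)
      then have e: "(k * SB - C * SX) / C * (V / (k * m)) = V * SB / (k * Ck) - V * SX / (k * m)"
        using \<open>C * m = k * Ck\<close> by simp
      show ?thesis
        unfolding e using k(1) \<open>0 < m\<close> \<open>0 < Ck\<close> by (simp add: field_simps)
    qed
    from this[OF _ _ binomial_absorption_pred[OF k(1), of n, folded C_def]]
    show ?thesis using k by (simp add: ring_distribs)
  qed
  finally have "(LINT p:\<Delta>|lebesgue. f p) / V
      \<le> (1 / k) * ((1 / real ((n + 1) choose k)) * SB) + (1 - 1 / k) * (SX / (n + 1))"
    using \<open>0 < V\<close> by (simp add: pos_divide_le_eq mult.commute)
  then show ?thesis unfolding Avg_def V_def SB_def SX_def .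
qed

lemma convex_on_bary_le_mean:
  assumes f: "convex_on \<Delta> f" and K: "K \<subseteq> {0..n}" "K \<noteq> {}"
  shows "f (bary x K) \<le> (\<Sum>i\<in>K. f (x i)) / card K"
proof -
  have "finite K" using K(1) finite_subset by blast
  have "f (\<Sum>i\<in>K. (1 / card K) *\<^sub>R x i) \<le> (\<Sum>i\<in>K. (1 / card K) * f (x i))"
    using \<open>finite K\<close> K vertex_in_simplex by (intro convex_on_sum[OF _ _ f]) auto
  then show ?thesis by (simp add: bary_def scaleR_sum_right sum_divide_distrib)
qed

lemma average_barycenters_le_average_vertices:
  assumes f: "convex_on \<Delta> f" and k: "1 \<le> k" "k \<le> n + 1"
  shows "(1 / real ((n + 1) choose k)) * (\<Sum>K\<in>vertex_subsets k. f (bary x K))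
    \<le> (\<Sum>i\<in>{0..n}. f (x i)) / (n + 1)"
proof -
  define C where "C = real (n choose (k - 1))"
  have "(\<Sum>K\<in>vertex_subsets k. f (bary x K)) \<le> (\<Sum>K\<in>vertex_subsets k. (\<Sum>i\<in>K. f (x i)) / k)"
    using convex_on_bary_le_mean[OF f] k(1) by (intro sum_mono) (force simp: Suc_le_eq card_gt_0_iff)
  also have "\<dots> = C * (\<Sum>i\<in>{0..n}. f (x i)) / k"
    using sum_subsets_card[of "{0..n}" k "\<lambda>i. f (x i)"] k(1)
    by (simp add: C_def flip: sum_divide_distrib)
  finally have "(1 / real ((n + 1) choose k)) * (\<Sum>K\<in>vertex_subsets k. f (bary x K))
      \<le> (1 / real ((n + 1) choose k)) * (C * (\<Sum>i\<in>{0..n}. f (x i)) / k)"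
    by (intro mult_left_mono) auto
  also have "\<dots> = C * (\<Sum>i\<in>{0..n}. f (x i)) / (k * real ((n + 1) choose k))"
    by simp
  also have "k * real ((n + 1) choose k) = C * real (n + 1)"
    using binomial_absorption_pred[OF k(1), of n] unfolding C_def by simp
  also have "C * (\<Sum>i\<in>{0..n}. f (x i)) / (C * real (n + 1)) = (\<Sum>i\<in>{0..n}. f (x i)) / (n + 1)"
    using k(2) unfolding C_def by simp
  finally show ?thesis .
qed

end

theorem corollary10:
  fixes x :: "nat \<Rightarrow> 'a::euclidean_space"
    and f :: "'a \<Rightarrow> real"
    and n k :: nat
  assumes dim: "DIM('a) = n"
    and inj: "inj_on x {0..n}"
    and indep: "\<not> affine_dependent (x ` {0..n})"
    and conv: "convex_on (convex hull (x ` {0..n})) f"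
    and k: "1 \<le> k" "k \<le> n + 1"
  shows "Avg f (convex hull (x ` {0..n}))
    \<le> (real ((n + 1) div k) / real (n + 1)) *
         ((1 / real ((n + 1) choose k)) *
           (\<Sum>K | K \<subseteq> {0..n} \<and> card K = k. f (bary x K)))
      + (1 - real ((n + 1) div k) / real (n + 1)) *
         ((\<Sum>i = 0..n. f (x i)) / real (n + 1))"
proof -
  interpret simplex x n using dim inj indep by unfold_locales
  define \<alpha> where "\<alpha> = real ((n + 1) div k) / real (n + 1)"
  define B where "B = (1 / real ((n + 1) choose k)) * (\<Sum>K\<in>vertex_subsets k. f (bary x K))"
  define X where "X = (\<Sum>i = 0..n. f (x i)) / real (n + 1)"
  have f: "convex_on \<Delta> f" using conv by (simp add: \<Delta>_def)
  have "Avg f \<Delta> \<le> (1 / k) * B + (1 - 1 / k) * X"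
    using average_le_barycenter_vertex_mixture[OF f k] by (simp add: B_def X_def)
  have "B \<le> X"
    using average_barycenters_le_average_vertices[OF f k] by (simp add: B_def X_def)
  have "\<alpha> \<le> 1 / k"
  proof -
    have "real ((n + 1) div k) / real (n + 1) \<le> real (n + 1) / real k / real (n + 1)"
      by (intro divide_right_mono of_nat_div_le_of_nat) simp
    then show ?thesis by (simp add: \<alpha>_def)
  qed
  then have "(1 / k - \<alpha>) * (B - X) \<le> 0"
    using \<open>B \<le> X\<close> by (simp add: mult_nonneg_nonpos)
  then have "(1 / k) * B + (1 - 1 / k) * X \<le> \<alpha> * B + (1 - \<alpha>) * X"
    by (simp add: algebra_simps diff_divide_distrib)
  with \<open>Avg f \<Delta> \<le> (1 / k) * B + (1 - 1 / k) * X\<close> have "Avg f \<Delta> \<le> \<alpha> * B + (1 - \<alpha>) * X"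
    by linarith
  then show ?thesis by (simp add: \<alpha>_def B_def X_def \<Delta>_def)
qed

end
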